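(* Let $S$ be a numerical semigroup with minimal generators $a_1<a_2<\cdots<a_\nu$, with embedding dimension $\nu=\nu(S)\ge10$. If $a_2>\frac{c(S)+\mu(S)}{3}$ and $$\mu(S)\le\frac{8}{25}\nu^2+\frac15\nu-\frac54,$$ then $S$ satisfies Wilf's conjecture, i.e. $\nu(S)|L(S)|\ge c(S)$.
   Context: A numerical semigroup is a submonoid $S\subseteq\mathbb{N}$ with finite complement. $\nu(S)$ is the number of minimal generators, $\mu(S)=a_1$ the multiplicity, $c(S)$ the conductor (least integer with $c(S)+\mathbb{N}\subseteq S$), and $L(S)=\{x\in S:0\le x<c(S)\}$. *)

theory Defs
  imports Complex_Main
begin

definition numerical_semigroup :: "nat set \<Rightarrow> bool" where
  "numerical_semigroup S \<longleftrightarrow> 0 \<in> S \<and> (\<forall>x\<in>S. \<forall>y\<in>S. x + y \<in> S) \<and> finite (UNIV - S)"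

definition min_gens :: "nat set \<Rightarrow> nat set" where
  "min_gens S = {x \<in> S. x \<noteq> 0 \<and> \<not> (\<exists>y\<in>S. \<exists>z\<in>S. y \<noteq> 0 \<and> z \<noteq> 0 \<and> x = y + z)}"

definition embdim :: "nat set \<Rightarrow> nat" where
  "embdim S = card (min_gens S)"

definition multiplicity :: "nat set \<Rightarrow> nat" where
  "multiplicity S = (LEAST x. x \<in> S \<and> x \<noteq> 0)"

definition conductor :: "nat set \<Rightarrow> nat" where
  "conductor S = (LEAST c. \<forall>n\<ge>c. n \<in> S)"

definition left_elts :: "nat set \<Rightarrow> nat set" where
  "left_elts S = {x \<in> S. x < conductor S}"

end

theory Submission
  imports Defs
begin

text \<open>Write \<open>m\<close> for the multiplicity, \<open>c\<close> for the conductor, \<open>q = \<lceil>c/m\<rceil>\<close> and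
  \<open>N g = \<lceil>(c - g)/m\<rceil>\<close>. Minimal generators are pairwise incongruent modulo \<open>m\<close>, so the
  progressions \<open>g + km < c\<close> for \<open>g = 0\<close> and for the generators \<open>g \<noteq> m\<close> are disjoint and give
  \<open>|L| \<ge> q + \<Sum> N g\<close>. The Apery set of \<open>m\<close> has \<open>m\<close> elements: \<open>0\<close>, the \<open>\<nu> - 1\<close> generators
  other than \<open>m\<close>, and a rest \<open>Q\<close>. If every generator \<open>g \<noteq> m\<close> satisfies \<open>3g > c + m\<close>, each
  element of \<open>Q\<close> is a sum of two such generators, and since it lies below \<open>c + m\<close> this forces
  \<open>q \<le> N x + N y\<close> up to a correction counted by \<open>qm - c\<close>; summing over pairs gives
  \<open>q|Q| \<le> \<nu> \<Sum> N g + qm - c\<close>. With \<open>m = \<nu> + |Q|\<close> this yields \<open>c \<le> \<nu>(q + \<Sum> N g) \<le> \<nu>|L|\<close>.\<close>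

definition ceil_div :: "nat \<Rightarrow> nat \<Rightarrow> nat" where
  "ceil_div a b = (a + b - 1) div b"

lemma less_ceil_div_iff:
  assumes "0 < b"
  shows "k < ceil_div a b \<longleftrightarrow> k * b < a"
proof -
  have "k < ceil_div a b \<longleftrightarrow> Suc k * b \<le> a + b - 1"
    unfolding ceil_div_def using assms by (metis Suc_le_eq less_eq_div_iff_mult_less_eq)
  also have "\<dots> \<longleftrightarrow> k * b < a"
    using assms by auto
  finally show ?thesis .
qed

lemma ceil_div_mult_bounds:
  assumes "0 < b"
  shows "a \<le> ceil_div a b * b" and "ceil_div a b * b < a + b"
proof -
  have "ceil_div a b * b + (a + b - 1) mod b = a + b - 1"
    unfolding ceil_div_def by simp
  moreover have "(a + b - 1) mod b < b"
    using assms by simp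
  ultimately show "a \<le> ceil_div a b * b" and "ceil_div a b * b < a + b"
    using assms by linarith+
qed

lemma ceil_div_le_add:
  fixes c m x y :: nat
  assumes "0 < m" and "x + y < c + m"
  shows "ceil_div c m \<le> ceil_div (c - x) m + ceil_div (c - y) m
           + (if c + m \<le> x + y + (ceil_div c m * m - c) then 1 else 0)"
proof -
  let ?q = "ceil_div c m" and ?Nx = "ceil_div (c - x) m" and ?Ny = "ceil_div (c - y) m"
  have "c - x \<le> ?Nx * m" "c - y \<le> ?Ny * m" "c \<le> ?q * m" "?q * m < c + m"
    using ceil_div_mult_bounds[OF assms(1)] by blast+
  then have "?q * m < (?Nx + ?Ny + (if c + m \<le> x + y + (?q * m - c) then 2 else 1)) * m"
    using assms(2) by (auto simp: algebra_simps)
  then show ?thesis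
    by (simp only: mult_less_cancel2) auto
qed

lemma sum_ordered_pairs:
  fixes T :: "'a::linorder set" and f :: "'a \<Rightarrow> 'b::comm_semiring_1"
  assumes "finite T"
  shows "(\<Sum>(x, y)\<in>{(x, y). x \<in> T \<and> y \<in> T \<and> x \<le> y}. f x + f y) = of_nat (card T + 1) * sum f T"
proof -
  let ?P = "{(x, y). x \<in> T \<and> y \<in> T \<and> x \<le> y}"
  have fst_part: "(\<Sum>(x, y)\<in>?P. f x) = (\<Sum>x\<in>T. \<Sum>y\<in>{y\<in>T. x \<le> y}. f x)"
    using assms by (subst sum.Sigma) (auto intro!: sum.cong)
  have snd_part: "(\<Sum>(x, y)\<in>?P. f y) = (\<Sum>y\<in>T. \<Sum>x\<in>{x\<in>T. x \<le> y}. f y)"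
  proof -
    have "(\<Sum>(x, y)\<in>?P. f y) = (\<Sum>(y, x)\<in>Sigma T (\<lambda>y. {x\<in>T. x \<le> y}). f y)"
      by (rule sum.reindex_bij_witness[of _ prod.swap prod.swap]) auto
    then show ?thesis
      using assms by (subst sum.Sigma) auto
  qed
  have card_split: "card {y\<in>T. x \<le> y} + card {y\<in>T. y \<le> x} = card T + 1" if "x \<in> T" for x
  proof -
    have "{y\<in>T. x \<le> y} \<union> {y\<in>T. y \<le> x} = T" and "{y\<in>T. x \<le> y} \<inter> {y\<in>T. y \<le> x} = {x}"
      using that by auto
    then show ?thesis
      using assms card_Un_Int[of "{y\<in>T. x \<le> y}" "{y\<in>T. y \<le> x}"] by simp
  qed
  have "(\<Sum>(x, y)\<in>?P. f x + f y) = (\<Sum>(x, y)\<in>?P. f x) + (\<Sum>(x, y)\<in>?P. f y)"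
    by (simp add: split_def sum.distrib)
  also have "\<dots> = (\<Sum>x\<in>T. of_nat (card {y\<in>T. x \<le> y} + card {y\<in>T. y \<le> x}) * f x)"
    unfolding fst_part snd_part by (simp add: sum.distrib algebra_simps)
  also have "\<dots> = (\<Sum>x\<in>T. of_nat (card T + 1) * f x)"
    using card_split by (intro sum.cong) simp_all
  finally show ?thesis
    by (simp only: sum_distrib_left)
qed

lemma mult_card_le_sum_over_preimage:
  fixes f :: "'a \<Rightarrow> 'b" and F :: "'a \<Rightarrow> nat" and \<delta> :: "'b \<Rightarrow> nat"
  assumes "finite P" "Q \<subseteq> f ` P" "\<And>p. p \<in> P \<Longrightarrow> f p \<in> Q \<Longrightarrow> q \<le> F p + \<delta> (f p)"
  shows "q * card Q \<le> sum F P + sum \<delta> Q"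
proof -
  let ?\<pi> = "inv_into P f"
  have \<pi>: "?\<pi> w \<in> P" "f (?\<pi> w) = w" if "w \<in> Q" for w
    using that assms(2) by (auto intro: inv_into_into f_inv_into_f)
  have "q * card Q = (\<Sum>w\<in>Q. q)"
    by simp
  also have "\<dots> \<le> (\<Sum>w\<in>Q. F (?\<pi> w) + \<delta> w)"
    using assms(3) \<pi> by (intro sum_mono) force
  also have "\<dots> = sum F (?\<pi> ` Q) + sum \<delta> Q"
    using inj_on_inv_into[OF assms(2)] by (simp add: sum.distrib sum.reindex)
  also have "sum F (?\<pi> ` Q) \<le> sum F P"
    using \<pi>(1) assms(1) by (intro sum_mono2) auto
  finally show ?thesis
    by simp
qed

text \<open>The guard \<open>n \<le> w\<close> stands in for the integer condition \<open>w - n \<notin> S\<close>, which natural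
  subtraction would otherwise make false for \<open>w < n\<close>.\<close>
definition apery_set :: "nat set \<Rightarrow> nat \<Rightarrow> nat set" where
  "apery_set S n = {w \<in> S. n \<le> w \<longrightarrow> w - n \<notin> S}"

locale num_semigroup =
  fixes S :: "nat set"
  assumes numerical_semigroup: "numerical_semigroup S"
begin

lemma zero_mem: "0 \<in> S"
  and add_mem: "x \<in> S \<Longrightarrow> y \<in> S \<Longrightarrow> x + y \<in> S"
  and finite_gaps: "finite (UNIV - S)"
  using numerical_semigroup unfolding numerical_semigroup_def by auto

lemma mult_mem: "x \<in> S \<Longrightarrow> k * x \<in> S"
  by (induction k) (simp_all add: zero_mem add_mem)

lemma mem_if_conductor_le:
  assumes "conductor S \<le> x"
  shows "x \<in> S"
proof -
  obtain b where "\<forall>y\<in>UNIV - S. y < b"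
    using finite_gaps finite_nat_set_iff_bounded by blast
  then have "\<forall>y\<ge>b. y \<in> S"
    by (meson DiffI UNIV_I leD)
  then have "\<forall>y\<ge>conductor S. y \<in> S"
    unfolding conductor_def by (rule LeastI)
  with assms show ?thesis by blast
qed

lemma multiplicity_mem: "multiplicity S \<in> S" and multiplicity_pos: "0 < multiplicity S"
proof -
  have "Suc (conductor S) \<in> S \<and> Suc (conductor S) \<noteq> 0"
    by (simp add: mem_if_conductor_le)
  then have "multiplicity S \<in> S \<and> multiplicity S \<noteq> 0"
    unfolding multiplicity_def by (rule LeastI)
  then show "multiplicity S \<in> S" and "0 < multiplicity S"
    by auto
qed

lemma multiplicity_le: "x \<in> S \<Longrightarrow> x \<noteq> 0 \<Longrightarrow> multiplicity S \<le> x"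
  unfolding multiplicity_def by (simp add: Least_le)

lemma min_gens_mem: "g \<in> min_gens S \<Longrightarrow> g \<in> S"
  and min_gens_nonzero: "g \<in> min_gens S \<Longrightarrow> g \<noteq> 0"
  and min_gens_not_sum: "g \<in> min_gens S \<Longrightarrow> y \<in> S \<Longrightarrow> z \<in> S \<Longrightarrow> y \<noteq> 0 \<Longrightarrow> z \<noteq> 0 \<Longrightarrow> g \<noteq> y + z"
  unfolding min_gens_def by auto

lemma sum_if_not_min_gens:
  assumes "x \<in> S" "x \<noteq> 0" "x \<notin> min_gens S"
  obtains y z where "y \<in> S" "z \<in> S" "y \<noteq> 0" "z \<noteq> 0" "x = y + z"
  using assms unfolding min_gens_def by auto

lemma multiplicity_min_gens: "multiplicity S \<in> min_gens S"
proof -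
  have "multiplicity S \<noteq> y + z" if "y \<in> S" "z \<in> S" "y \<noteq> 0" "z \<noteq> 0" for y z
    using multiplicity_le[OF that(1,3)] that(4) by linarith
  then show ?thesis
    using multiplicity_mem multiplicity_pos unfolding min_gens_def by auto
qed

lemma multiple_mem_if_mod_eq:
  assumes "n \<in> S" "x mod n = y mod n" "x \<le> y"
  shows "y - x \<in> S"
proof -
  have "n dvd y - x"
    using assms(2,3) mod_eq_dvd_iff_nat by metis
  then obtain k where "y - x = k * n"
    by (metis dvdE mult.commute)
  then show ?thesis
    using assms(1) by (simp add: mult_mem)
qed

lemma min_gens_mod_inj:
  assumes "n \<in> S"
  shows "inj_on (\<lambda>x. x mod n) (min_gens S)"
proof -
  have "g = g'" if "g \<in> min_gens S" "g' \<in> min_gens S" "g mod n = g' mod n" "g \<le> g'" for g g'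
  proof (rule ccontr)
    assume "g \<noteq> g'"
    then have "g' = g + (g' - g)" "g' - g \<noteq> 0"
      using that(4) by auto
    then show False
      using min_gens_not_sum[OF that(2) min_gens_mem[OF that(1)] multiple_mem_if_mod_eq[OF assms that(3,4)]]
        min_gens_nonzero[OF that(1)] by blast
  qed
  then show ?thesis
    unfolding inj_on_def by (metis nat_le_linear)
qed

lemma finite_min_gens: "finite (min_gens S)"
  by (rule inj_on_finite[OF min_gens_mod_inj[OF multiplicity_mem], of "{..<multiplicity S}"])
    (auto simp: multiplicity_pos)

lemma finite_left_elts: "finite (left_elts S)"
  unfolding left_elts_def by (rule finite_subset[of _ "{..<conductor S}"]) auto

lemma inj_on_mod_apery_set:
  assumes "n \<in> S" "0 < n"
  shows "inj_on (\<lambda>w. w mod n) (apery_set S n)"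
proof -
  have "w = w'" if "w \<in> apery_set S n" "w' \<in> apery_set S n" "w mod n = w' mod n" "w \<le> w'" for w w'
  proof (rule ccontr)
    assume "w \<noteq> w'"
    have "n dvd w' - w"
      using that(3,4) mod_eq_dvd_iff_nat by metis
    then have "n \<le> w' - w"
      using \<open>w \<noteq> w'\<close> that(4) by (auto dest: dvd_imp_le)
    then have le: "w \<le> w' - n"
      using assms(2) by linarith
    then have "w mod n = (w' - n) mod n"
      using that(3) le_mod_geq[of n w'] \<open>n \<le> w' - w\<close> by simp
    then have "w' - n - w \<in> S"
      using multiple_mem_if_mod_eq[OF assms(1) _ le] by blast
    moreover have "w \<in> S"
      using that(1) unfolding apery_set_def by blast
    ultimately have "w + (w' - n - w) \<in> S"
      by (simp add: add_mem)
    then have "w' - n \<in> S"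
      using le by (metis le_add_diff_inverse)
    then show False
      using that(2) \<open>n \<le> w' - w\<close> unfolding apery_set_def by auto
  qed
  then show ?thesis
    unfolding inj_on_def by (metis nat_le_linear)
qed

lemma mod_image_apery_set:
  assumes "0 < n"
  shows "(\<lambda>w. w mod n) ` apery_set S n = {..<n}"
proof -
  have "r \<in> (\<lambda>w. w mod n) ` apery_set S n" if "r < n" for r
  proof -
    define P where "P w \<longleftrightarrow> w \<in> S \<and> w mod n = r" for w
    have "P (r + conductor S * n)"
      using that assms mem_if_conductor_le[of "r + conductor S * n"] unfolding P_def by (simp add: trans_le_add2)
    then have least: "P (Least P)"
      by (rule LeastI)
    have below: "\<not> P w" if "w < Least P" for w
      using that by (rule not_less_Least)
    have "Least P - n \<notin> S" if "n \<le> Least P"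
      using below[of "Least P - n"] least assms that unfolding P_def by (simp add: le_mod_geq)
    then have "Least P \<in> apery_set S n"
      using least unfolding apery_set_def P_def by blast
    then show ?thesis
      using least unfolding P_def by force
  qed
  then show ?thesis
    using assms by auto
qed

lemma card_apery_set:
  assumes "n \<in> S" "0 < n"
  shows "card (apery_set S n) = n"
  using card_image[OF inj_on_mod_apery_set[OF assms]] mod_image_apery_set[OF assms(2)] by simp

lemma apery_set_less:
  assumes "w \<in> apery_set S n"
  shows "w < conductor S + n"
  using assms mem_if_conductor_le[of "w - n"] unfolding apery_set_def by force

lemma apery_set_summand_not_dvd:
  assumes "w \<in> apery_set S n" "n \<in> S" "u \<in> S" "u \<noteq> 0" "u \<le> w" "w - u \<in> S"
  shows "\<not> n dvd u"
proof
  assume "n dvd u"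
  then have "n \<le> u" "u - n \<in> S"
    using assms(2-4) multiple_mem_if_mod_eq[of n n u] by (auto dest: dvd_imp_le simp: mod_eq_0_iff_dvd)
  moreover have "w - n = (u - n) + (w - u)"
    using assms(5) \<open>n \<le> u\<close> by simp
  ultimately have "w - n \<in> S"
    using assms(6) add_mem by metis
  with assms(1,5) \<open>n \<le> u\<close> show False
    unfolding apery_set_def by auto
qed

lemma min_gens_subset_apery_set:
  assumes "n \<in> S" "0 < n"
  shows "min_gens S - {n} \<subseteq> apery_set S n"
proof
  fix g assume g: "g \<in> min_gens S - {n}"
  have "g - n \<notin> S" if "n \<le> g"
    using g that assms min_gens_not_sum[of g n "g - n"] by auto
  then show "g \<in> apery_set S n"
    using g min_gens_mem unfolding apery_set_def by auto
qed

lemma multiplicity_eq_embdim_add: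
  "multiplicity S = embdim S + card (apery_set S (multiplicity S) - insert 0 (min_gens S))"
proof -
  let ?m = "multiplicity S" and ?G = "min_gens S"
  let ?A = "apery_set S ?m"
  have "?m \<notin> ?A"
    using zero_mem unfolding apery_set_def by auto
  then have diff: "?A - insert 0 (?G - {?m}) = ?A - insert 0 ?G"
    by auto
  have sub: "insert 0 (?G - {?m}) \<subseteq> ?A"
    using min_gens_subset_apery_set[OF multiplicity_mem multiplicity_pos] zero_mem multiplicity_pos
    unfolding apery_set_def by auto
  have "0 \<notin> ?G"
    using min_gens_nonzero by blast
  then have card_X: "card (insert 0 (?G - {?m})) = embdim S"
    using finite_min_gens multiplicity_min_gens card_Suc_Diff1[of ?G ?m]
    unfolding embdim_def by (simp add: card_insert_if)
  have card_A: "card ?A = ?m"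
    by (rule card_apery_set[OF multiplicity_mem multiplicity_pos])
  then have "finite ?A"
    using multiplicity_pos card_ge_0_finite[of ?A] by simp
  then have "card (?A - insert 0 (?G - {?m})) = card ?A - card (insert 0 (?G - {?m}))"
    and "card (insert 0 (?G - {?m})) \<le> card ?A"
    using card_Diff_subset[OF finite_subset[OF sub] sub] card_mono[OF _ sub] by simp_all
  then show ?thesis
    unfolding diff[symmetric] using card_X card_A by linarith
qed

lemma sum_ceil_div_le_card_left_elts:
  assumes "finite A" "A \<subseteq> S" "n \<in> S" "0 < n" "inj_on (\<lambda>x. x mod n) A"
  shows "(\<Sum>g\<in>A. ceil_div (conductor S - g) n) \<le> card (left_elts S)"
proof -
  define C where "C g = (\<lambda>k. g + k * n) ` {..<ceil_div (conductor S - g) n}" for g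
  have card_C: "card (C g) = ceil_div (conductor S - g) n" for g
    unfolding C_def using assms(4) by (subst card_image) (auto simp: inj_on_def)
  have C_sub: "C g \<subseteq> left_elts S" if "g \<in> A" for g
  proof
    fix e assume "e \<in> C g"
    then obtain k where "k * n < conductor S - g" "e = g + k * n"
      unfolding C_def using less_ceil_div_iff[OF assms(4)] by auto
    moreover have "g + k * n \<in> S"
      using that assms(2,3) add_mem mult_mem by blast
    ultimately show "e \<in> left_elts S"
      unfolding left_elts_def by auto
  qed
  have C_mod: "e mod n = g mod n" if "e \<in> C g" for e g
    using that unfolding C_def by (auto simp: mod_mult_self2)
  have "C g \<inter> C g' = {}" if "g \<in> A" "g' \<in> A" "g \<noteq> g'" for g g'
  proof (rule equals0I)
    fix e assume "e \<in> C g \<inter> C g'"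
    then have "g mod n = g' mod n"
      using C_mod by (metis IntD1 IntD2)
    then show False
      using inj_onD[OF assms(5) _ that(1,2)] that(3) by blast
  qed
  then have "card (\<Union>(C ` A)) = (\<Sum>g\<in>A. card (C g))"
    using assms(1) by (intro card_UN_disjoint) (auto simp: C_def)
  also have "\<dots> = (\<Sum>g\<in>A. ceil_div (conductor S - g) n)"
    by (simp only: card_C)
  finally have "card (\<Union>(C ` A)) = (\<Sum>g\<in>A. ceil_div (conductor S - g) n)" .
  moreover have "card (\<Union>(C ` A)) \<le> card (left_elts S)"
    using C_sub by (intro card_mono[OF finite_left_elts]) blast
  ultimately show ?thesis
    by simp
qed

end

locale num_semigroup_large_gens = num_semigroup +
  assumes min_gens_large:
    "g \<in> min_gens S \<Longrightarrow> g \<noteq> multiplicity S \<Longrightarrow> conductor S + multiplicity S < 3 * g"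
begin

lemma multiplicity_dvd_if_small:
  assumes "u \<in> S" "3 * u \<le> conductor S + multiplicity S"
  shows "multiplicity S dvd u"
  using assms
proof (induction u rule: less_induct)
  case (less u)
  consider "u = 0" | "u \<in> min_gens S"
    | y z where "y \<in> S" "z \<in> S" "y \<noteq> 0" "z \<noteq> 0" "u = y + z"
    using sum_if_not_min_gens[OF less.prems(1)] by blast
  then show ?case
  proof cases
    case 2
    then show ?thesis
      using min_gens_large less.prems(2) by force
  next
    case 3
    then show ?thesis
      using less.IH[of y] less.IH[of z] less.prems(2) by simp
  qed simp
qed

lemma apery_set_summand_large:
  assumes "w \<in> apery_set S (multiplicity S)" "u \<in> S" "u \<noteq> 0" "u \<le> w" "w - u \<in> S"
  shows "conductor S + multiplicity S < 3 * u" and "u \<noteq> multiplicity S"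
  using apery_set_summand_not_dvd[OF assms(1) multiplicity_mem assms(2-5)]
    multiplicity_dvd_if_small[OF assms(2)] by fastforce+

lemma apery_set_sum_of_min_gens:
  assumes "w \<in> apery_set S (multiplicity S) - insert 0 (min_gens S)"
  obtains x y where "x \<in> min_gens S - {multiplicity S}" "y \<in> min_gens S - {multiplicity S}"
    "x \<le> y" "w = x + y"
proof -
  let ?m = "multiplicity S" and ?c = "conductor S"
  have w: "w \<in> apery_set S ?m" "w \<in> S" "w \<noteq> 0" "w \<notin> min_gens S"
    using assms unfolding apery_set_def by auto
  have summand_gen: "u \<in> min_gens S - {?m}"
    if u: "u \<in> S" "u \<noteq> 0" "w - u \<in> S" "w - u \<noteq> 0" for u
  proof (rule ccontr)
    assume "u \<notin> min_gens S - {?m}"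
    then have "u \<notin> min_gens S"
      using apery_set_summand_large(2)[OF w(1) u(1,2) _ u(3)] u(4) by auto
    then obtain u1 u2 where parts: "u1 \<in> S" "u2 \<in> S" "u1 \<noteq> 0" "u2 \<noteq> 0" "u = u1 + u2"
      using sum_if_not_min_gens u(1,2) by blast
    have "w - u1 = u2 + (w - u)" "w - u2 = u1 + (w - u)"
      using parts(5) u(4) by auto
    then have "w - u1 \<in> S" "w - u2 \<in> S"
      using parts(1,2) u(3) add_mem by metis+
    then have "?c + ?m < 3 * u1" "?c + ?m < 3 * u2" "?c + ?m < 3 * (w - u)"
      using apery_set_summand_large(1)[OF w(1)] parts u u(4) by auto
    then show False
      using apery_set_less[OF w(1)] parts(5) u(4) by linarith
  qed
  obtain y z where yz: "y \<in> S" "z \<in> S" "y \<noteq> 0" "z \<noteq> 0" "w = y + z"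
    using sum_if_not_min_gens w(2-4) by blast
  then have "y \<in> min_gens S - {?m}" "z \<in> min_gens S - {?m}"
    using summand_gen[of y] summand_gen[of z] by auto
  then show ?thesis
    using that yz(5) by (metis add.commute nat_le_linear)
qed

lemma ceil_div_mult_card_apery_non_gens_le:
  defines "q \<equiv> ceil_div (conductor S) (multiplicity S)"
  shows "q * card (apery_set S (multiplicity S) - insert 0 (min_gens S))
    \<le> embdim S * (\<Sum>g\<in>min_gens S - {multiplicity S}. ceil_div (conductor S - g) (multiplicity S))
      + (q * multiplicity S - conductor S)"
proof -
  let ?m = "multiplicity S" and ?c = "conductor S" and ?G' = "min_gens S - {multiplicity S}"
  let ?Q = "apery_set S ?m - insert 0 (min_gens S)"
  let ?\<rho> = "q * ?m - ?c"
  define N where "N g = ceil_div (?c - g) ?m" for g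
  define \<delta> where "\<delta> w = (if ?c + ?m \<le> w + ?\<rho> then 1 else 0 :: nat)" for w
  define P where "P = {(x, y). x \<in> ?G' \<and> y \<in> ?G' \<and> x \<le> y}"
  have Q_sub: "?Q \<subseteq> (\<lambda>(x, y). x + y) ` P"
  proof
    fix w assume "w \<in> ?Q"
    then obtain x y where "x \<in> ?G'" "y \<in> ?G'" "x \<le> y" "w = x + y"
      by (rule apery_set_sum_of_min_gens)
    then show "w \<in> (\<lambda>(x, y). x + y) ` P"
      unfolding P_def by force
  qed
  have finite_P: "finite P"
    unfolding P_def using finite_min_gens by (auto intro: finite_subset[of _ "?G' \<times> ?G'"])
  have "q \<le> N x + N y + \<delta> (x + y)" if "x + y \<in> ?Q" for x y
    using ceil_div_le_add[OF multiplicity_pos, of x y ?c] apery_set_less[of "x + y"] that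
    unfolding N_def \<delta>_def q_def by simp
  then have "q * card ?Q \<le> (\<Sum>(x, y)\<in>P. N x + N y) + sum \<delta> ?Q"
    using finite_P Q_sub by (intro mult_card_le_sum_over_preimage) auto
  also have "(\<Sum>(x, y)\<in>P. N x + N y) = of_nat (card ?G' + 1) * sum N ?G'"
    unfolding P_def using finite_min_gens by (intro sum_ordered_pairs) simp
  also have "\<dots> = embdim S * sum N ?G'"
    using card_Suc_Diff1[OF finite_min_gens multiplicity_min_gens] unfolding embdim_def by simp
  also have "sum \<delta> ?Q \<le> ?\<rho>"
  proof -
    have "sum \<delta> ?Q = card (?Q \<inter> {w. ?c + ?m \<le> w + ?\<rho>})"
      unfolding \<delta>_def using finite_subset[OF Q_sub finite_imageI[OF finite_P]] by (simp add: sum.If_cases)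
    also have "\<dots> \<le> card {?c + ?m - ?\<rho>..<?c + ?m}"
      using apery_set_less by (intro card_mono) auto
    finally show ?thesis
      by simp
  qed
  finally show ?thesis
    unfolding N_def by simp
qed

theorem wilf_inequality: "conductor S \<le> embdim S * card (left_elts S)"
proof -
  let ?m = "multiplicity S" and ?c = "conductor S" and ?n = "embdim S"
  let ?G' = "min_gens S - {multiplicity S}"
  define q where "q = ceil_div ?c ?m"
  define \<Sigma> where "\<Sigma> = (\<Sum>g\<in>?G'. ceil_div (?c - g) ?m)"
  define k where "k = card (apery_set S ?m - insert 0 (min_gens S))"
  have "0 \<notin> ?G'"
    using min_gens_nonzero by blast
  have "g mod ?m \<noteq> 0" if "g \<in> ?G'" for g
    using inj_onD[OF min_gens_mod_inj[OF multiplicity_mem], of g ?m] that multiplicity_min_gens by auto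
  then have "inj_on (\<lambda>x. x mod ?m) (insert 0 ?G')"
    using inj_on_subset[OF min_gens_mod_inj[OF multiplicity_mem], of ?G'] by (auto simp: inj_on_insert image_iff)
  moreover have "insert 0 ?G' \<subseteq> S"
    using min_gens_mem zero_mem by blast
  ultimately have "(\<Sum>g\<in>insert 0 ?G'. ceil_div (?c - g) ?m) \<le> card (left_elts S)"
    using finite_min_gens multiplicity_mem multiplicity_pos by (intro sum_ceil_div_le_card_left_elts) auto
  then have left: "q + \<Sigma> \<le> card (left_elts S)"
    using finite_min_gens \<open>0 \<notin> ?G'\<close> unfolding q_def \<Sigma>_def by simp
  have "?c \<le> q * ?m"
    unfolding q_def by (rule ceil_div_mult_bounds(1)[OF multiplicity_pos])
  moreover have "q * ?m = q * (?n + k)"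
    using multiplicity_eq_embdim_add unfolding k_def by (rule arg_cong)
  ultimately have "?c + (q * ?m - ?c) = q * ?n + q * k"
    by (simp add: add_mult_distrib2)
  moreover have "q * k \<le> ?n * \<Sigma> + (q * ?m - ?c)"
    using ceil_div_mult_card_apery_non_gens_le unfolding q_def k_def \<Sigma>_def .
  ultimately have "?c \<le> ?n * (q + \<Sigma>)"
    by (simp add: algebra_simps)
  also have "\<dots> \<le> ?n * card (left_elts S)"
    using left by (rule mult_le_mono2)
  finally show ?thesis .
qed

end

lemma (in num_semigroup) num_semigroup_large_gens_if_second_gen:
  assumes "strict_mono_on {1..embdim S} a" "a ` {1..embdim S} = min_gens S" "2 \<le> embdim S"
    and "conductor S + multiplicity S < 3 * a 2"
  shows "num_semigroup_large_gens S"
proof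
  have one_two: "1 \<in> {1..embdim S}" "2 \<in> {1..embdim S}"
    using assms(3) by auto
  obtain j where j: "j \<in> {1..embdim S}" "a j = multiplicity S"
    using multiplicity_min_gens assms(2) by (metis imageE)
  have "a 1 \<in> min_gens S"
    using assms(2) one_two by blast
  then have "multiplicity S \<le> a 1"
    using multiplicity_le min_gens_mem min_gens_nonzero by blast
  moreover have "a 1 \<le> a j"
    using strict_mono_on_leD[OF assms(1) one_two(1) j(1)] j(1) by simp
  ultimately have a1: "a 1 = multiplicity S"
    using j(2) by simp
  fix g assume g: "g \<in> min_gens S" "g \<noteq> multiplicity S"
  then obtain i where i: "i \<in> {1..embdim S}" "g = a i"
    using assms(2) by (metis imageE)
  then have "2 \<le> i"
    using g(2) a1 by (cases "i = 1") auto
  then have "a 2 \<le> g"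
    using strict_mono_on_leD[OF assms(1) one_two(2) i(1)] i(2) by simp
  then show "conductor S + multiplicity S < 3 * g"
    using assms(4) by linarith
qed

text \<open>Only \<open>\<nu>(S) \<ge> 2\<close> is used.\<close>
theorem proposition4p6:
  fixes S :: "nat set" and a :: "nat \<Rightarrow> nat"
  assumes "numerical_semigroup S"
    and "embdim S \<ge> 10"
    and "strict_mono_on {1..embdim S} a"
    and "a ` {1..embdim S} = min_gens S"
    and "real (a 2) > (real (conductor S) + real (multiplicity S)) / 3"
    and "real (multiplicity S) \<le> 8/25 * real (embdim S) ^ 2 + 1/5 * real (embdim S) - 5/4"
  shows "embdim S * card (left_elts S) \<ge> conductor S"
proof -
  interpret num_semigroup S
    using assms(1) by unfold_locales
  have "real (conductor S + multiplicity S) < real (3 * a 2)"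
    using assms(5) by simp
  then have "conductor S + multiplicity S < 3 * a 2"
    by (simp only: of_nat_less_iff)
  then interpret num_semigroup_large_gens S
    using num_semigroup_large_gens_if_second_gen assms(2-4) by simp
  show ?thesis
    by (rule wilf_inequality)
qed

end
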